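(* Let $S=[m,M]\cap\mathbb{N}$ with integers $0\leq m\leq M$, let $d\in(0,\frac12)$, and let $(G_t=(V_t,E_t))_{t\geq0}$ be a dynamic graph generated by D3G3 with $S_S=S_C=S$ and threshold $d$. Let $n_t=|V_t|$ and let $s_t=|V_t\cap V_{t+1}|$ be the number of vertices surviving from step $t$ to step $t+1$. Then, whenever $V_t\neq\emptyset$, $$\mathcal{N}^V_t=\frac{n_t}{n_t+s_t}.$$
   Context: Let $\mathbb{T}=[0,1)^2$ be the unit torus with toroidal Euclidean distance; a geometric graph with threshold $d$ on a finite point set has edges between distinct points at distance $\leq d$. D3G3 takes $d$, sets $S_S,S_C\subseteq\mathbb{N}$ and a non-null seed geometric graph $G_0$. From $G_t$, $G_{t+1}$ is obtained by applying simultaneously to each $v\in V_t$ (with $\deg(v)$ its degree in $G_t$): $v\in V_{t+1}$ (same position) iff $\deg(v)\in S_S$; if $\deg(v)\in S_C$, a brand new vertex (distinct from all vertices ever present) is added to $V_{t+1}$ at a uniformly random position. No other vertices are in $V_{t+1}$; $E_{t+1}$ follows the geometric rule. The vertices nervousness is $\mathcal{N}^V_t=\frac{|V_{t+1}\triangle V_t|}{|V_{t+1}\cup V_t|}$ with $A\triangle B=(A\cup B)\setminus(A\cap B)$. *)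

theory Defs
  imports Main Complex_Main
begin

definition in_torus :: "real \<times> real \<Rightarrow> bool" where
  "in_torus p \<longleftrightarrow> 0 \<le> fst p \<and> fst p < 1 \<and> 0 \<le> snd p \<and> snd p < 1"

definition circ_dist :: "real \<Rightarrow> real \<Rightarrow> real" where
  "circ_dist a b = min \<bar>a - b\<bar> (1 - \<bar>a - b\<bar>)"

definition torus_dist :: "real \<times> real \<Rightarrow> real \<times> real \<Rightarrow> real" where
  "torus_dist p q = sqrt ((circ_dist (fst p) (fst q))^2 + (circ_dist (snd p) (snd q))^2)"

definition geo_deg :: "real \<Rightarrow> ('v \<Rightarrow> real \<times> real) \<Rightarrow> 'v set \<Rightarrow> 'v \<Rightarrow> nat" where
  "geo_deg d pos V v = card {u \<in> V. u \<noteq> v \<and> torus_dist (pos u) (pos v) \<le> d}"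

text \<open>A (possible realisation of a) D3G3 run: vertex sets V t, with a global position
  map pos (vertices keep their positions, and vertices are never reused).\<close>
definition d3g3_run :: "real \<Rightarrow> nat set \<Rightarrow> nat set \<Rightarrow> (nat \<Rightarrow> 'v set) \<Rightarrow> ('v \<Rightarrow> real \<times> real) \<Rightarrow> bool" where
  "d3g3_run d SS SC V pos \<longleftrightarrow>
     finite (V 0) \<and> V 0 \<noteq> {} \<and>
     (\<forall>t. \<forall>v \<in> V t. in_torus (pos v)) \<and>
     (\<forall>t. \<exists>c :: 'v \<Rightarrow> 'v.
         inj_on c {v \<in> V t. geo_deg d pos (V t) v \<in> SC} \<and>
         (\<forall>v \<in> {v \<in> V t. geo_deg d pos (V t) v \<in> SC}. c v \<notin> (\<Union>s\<le>t. V s)) \<and>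
         V (Suc t) = {v \<in> V t. geo_deg d pos (V t) v \<in> SS} \<union>
                     c ` {v \<in> V t. geo_deg d pos (V t) v \<in> SC})"

definition vertex_nervousness :: "(nat \<Rightarrow> 'v set) \<Rightarrow> nat \<Rightarrow> real" where
  "vertex_nervousness V t =
     real (card ((V (Suc t) \<union> V t) - (V (Suc t) \<inter> V t))) / real (card (V (Suc t) \<union> V t))"

end

theory Submission
  imports Defs
begin

text \<open>When the survival and creation rules coincide, the vertices of \<open>V t\<close> that survive are
  exactly those that create a new vertex. So \<open>V (Suc t)\<close> consists of the \<open>s\<^sub>t\<close> survivors and
  \<open>s\<^sub>t\<close> fresh vertices: the union \<open>V t \<union> V (Suc t)\<close> has \<open>n\<^sub>t + s\<^sub>t\<close> elements, and the symmetric
  difference, made of the \<open>n\<^sub>t - s\<^sub>t\<close> dying vertices and the \<open>s\<^sub>t\<close> newborn ones, has \<open>n\<^sub>t\<close>.\<close>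

lemma d3g3_run_finite:
  assumes "d3g3_run d SS SC V pos"
  shows "finite (V t)"
proof (induction t)
  case 0
  then show ?case using assms unfolding d3g3_run_def by blast
next
  case (Suc t)
  from assms obtain c where "V (Suc t) = {v \<in> V t. geo_deg d pos (V t) v \<in> SS} \<union>
                     c ` {v \<in> V t. geo_deg d pos (V t) v \<in> SC}"
    unfolding d3g3_run_def by blast
  then show ?case using Suc by simp
qed

lemma card_Un_fresh_image:
  assumes "finite X" "A \<subseteq> X" "inj_on c A" "c ` A \<inter> X = {}"
  shows "card (X \<union> c ` A) = card X + card A"
proof -
  have "card (X \<union> c ` A) = card X + card (c ` A)"
    using assms by (intro card_Un_disjoint) (auto intro: finite_subset)
  then show ?thesis
    using assms by (simp add: card_image)
qed

lemma card_Diff_Un_fresh_image: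
  assumes "finite X" "A \<subseteq> X" "inj_on c A" "c ` A \<inter> X = {}"
  shows "card ((X - A) \<union> c ` A) = card X"
proof -
  have "card ((X - A) \<union> c ` A) = card (X - A) + card (c ` A)"
    using assms by (intro card_Un_disjoint) (auto intro: finite_subset)
  also have "\<dots> = card X - card A + card A"
    using assms by (simp add: card_Diff_subset finite_subset card_image)
  also have "\<dots> = card X"
    using assms by (simp add: card_mono)
  finally show ?thesis .
qed

lemma vertex_nervousness_equal_rules:
  assumes "d3g3_run d S S V pos"
  shows "vertex_nervousness V t =
           real (card (V t)) / real (card (V t) + card (V t \<inter> V (Suc t)))"
proof -
  define A where "A = {v \<in> V t. geo_deg d pos (V t) v \<in> S}"
  from assms obtain c where inj: "inj_on c A" and fresh: "\<forall>v\<in>A. c v \<notin> (\<Union>s\<le>t. V s)"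
    and step: "V (Suc t) = A \<union> c ` A"
    unfolding d3g3_run_def A_def by blast
  have fin: "finite (V t)" using d3g3_run_finite[OF assms] .
  have A_sub: "A \<subseteq> V t" unfolding A_def by auto
  have disj: "c ` A \<inter> V t = {}" using fresh by auto
  have survivors: "V t \<inter> V (Suc t) = A" using step A_sub disj by auto
  have union: "V (Suc t) \<union> V t = V t \<union> c ` A" using step A_sub by auto
  have symdiff: "(V (Suc t) \<union> V t) - (V (Suc t) \<inter> V t) = (V t - A) \<union> c ` A"
    using step A_sub disj by auto
  show ?thesis
    unfolding vertex_nervousness_def symdiff unfolding union survivors
    using card_Un_fresh_image[OF fin A_sub inj disj]
      card_Diff_Un_fresh_image[OF fin A_sub inj disj]
    by simp
qed

theorem theorem12:
  fixes V :: "nat \<Rightarrow> 'v set" and pos :: "'v \<Rightarrow> real \<times> real"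
    and d :: real and m M t :: nat
  assumes "m \<le> M" and "0 < d" and "d < 1/2"
    and "d3g3_run d {m..M} {m..M} V pos"
    and "V t \<noteq> {}"
  shows "vertex_nervousness V t =
           real (card (V t)) / real (card (V t) + card (V t \<inter> V (Suc t)))"
  using vertex_nervousness_equal_rules[OF assms(4)] .

end
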